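(* Let $p$ be an imitation kernel $p(g\mid \mathbf w)=\sum_{k\in\mathcal A}\theta_kP_{(k)}(w_{-k},g)$ on a finite set $G$. If the $G$-stochastic function $k\mapsto P_{(k)}$ has more than one closed intercommunicating class, then $|\mathcal G(p)|>1$.
   Context: $G$ finite. A transition kernel is a map $p:G\times G^{-\mathbb N_+}\to[0,1]$ with $p(\cdot\mid \mathbf w)$ a probability on $G$ for every $\mathbf w=(w_{-1},w_{-2},\dots)$. An imitation kernel has the form $p(g\mid\mathbf w)=\sum_{k\in\mathcal A}\theta_kP_{(k)}(w_{-k},g)$, where $\mathcal A\subset\mathbb N_+$, $\theta=(\theta_k)_{k\in\mathcal A}$ is a probability distribution with $\theta_k>0$ for all $k\in\mathcal A$, and each $P_{(k)}$ is a stochastic matrix on $G$. A process $\mathbf X=(X_n)_{n\in\mathbb Z}$ (or its law on $G^{\mathbb Z}$) is compatible with $p$ if $P(X_n=g\mid X_{n-1},X_{n-2},\dots)=p(g\mid X_{n-1},X_{n-2},\dots)$ a.s. for all $n\in\mathbb Z$, $g\in G$; $\mathcal G(p)$ is the set of compatible laws. Words: $\mathcal A^*=\bigcup_{n\ge1}\mathcal A^n$, $P_{\mathbf a}=P_{(a_n)}\cdots P_{(a_1)}$ for $\mathbf a=(a_1,\dots,a_n)$. $i$ communicates with $j\ne i$ if $P_{\mathbf a}(i,j)>0$ for some word; intercommunication (each state with itself included) is an equivalence relation; a class $C$ is closed if $i\in C$ communicating with $j$ implies $j\in C$. *)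

theory Defs
  imports "HOL-Probability.Probability"
begin

text \<open>A past configuration w = (w_{-1}, w_{-2}, ...) is encoded as a function
  w :: nat => 'g with  w k = w_{-k}  for k >= 1 (the value w 0 is irrelevant).\<close>

definition stochastic_matrix :: "('g::finite \<Rightarrow> 'g \<Rightarrow> real) \<Rightarrow> bool" where
  "stochastic_matrix Q \<longleftrightarrow> (\<forall>i j. 0 \<le> Q i j) \<and> (\<forall>i. (\<Sum>j\<in>UNIV. Q i j) = 1)"

definition transition_kernel :: "('g::finite \<Rightarrow> (nat \<Rightarrow> 'g) \<Rightarrow> real) \<Rightarrow> bool" where
  "transition_kernel p \<longleftrightarrow> (\<forall>w. (\<forall>g. 0 \<le> p g w \<and> p g w \<le> 1) \<and> (\<Sum>g\<in>UNIV. p g w) = 1)"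

definition imitation_kernel ::
  "nat set \<Rightarrow> (nat \<Rightarrow> real) \<Rightarrow> (nat \<Rightarrow> 'g \<Rightarrow> 'g \<Rightarrow> real) \<Rightarrow> 'g \<Rightarrow> (nat \<Rightarrow> 'g) \<Rightarrow> real" where
  "imitation_kernel A \<theta> P g w = (\<Sum>\<^sub>\<infinity>k\<in>A. \<theta> k * P k (w k) g)"

text \<open>Matrix product and the word product P_a = P_(a_n) ... P_(a_1) for a = [a_1,...,a_n].\<close>
definition mmult :: "('g::finite \<Rightarrow> 'g \<Rightarrow> real) \<Rightarrow> ('g \<Rightarrow> 'g \<Rightarrow> real) \<Rightarrow> 'g \<Rightarrow> 'g \<Rightarrow> real" where
  "mmult Q R i j = (\<Sum>l\<in>UNIV. Q i l * R l j)"

fun word_matrix :: "(nat \<Rightarrow> 'g::finite \<Rightarrow> 'g \<Rightarrow> real) \<Rightarrow> nat list \<Rightarrow> 'g \<Rightarrow> 'g \<Rightarrow> real" where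
  "word_matrix P [] = (\<lambda>i j. if i = j then 1 else 0)"
| "word_matrix P (a # as) = mmult (word_matrix P as) (P a)"

definition communicates :: "nat set \<Rightarrow> (nat \<Rightarrow> 'g::finite \<Rightarrow> 'g \<Rightarrow> real) \<Rightarrow> 'g \<Rightarrow> 'g \<Rightarrow> bool" where
  "communicates A P i j \<longleftrightarrow> (\<exists>as. as \<noteq> [] \<and> set as \<subseteq> A \<and> word_matrix P as i j > 0)"

definition intercommunicate :: "nat set \<Rightarrow> (nat \<Rightarrow> 'g::finite \<Rightarrow> 'g \<Rightarrow> real) \<Rightarrow> 'g \<Rightarrow> 'g \<Rightarrow> bool" where
  "intercommunicate A P i j \<longleftrightarrow> i = j \<or> (communicates A P i j \<and> communicates A P j i)"

definition ic_class :: "nat set \<Rightarrow> (nat \<Rightarrow> 'g::finite \<Rightarrow> 'g \<Rightarrow> real) \<Rightarrow> 'g set \<Rightarrow> bool" where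
  "ic_class A P C \<longleftrightarrow> (\<exists>i. C = {j. intercommunicate A P i j})"

definition closed_class :: "nat set \<Rightarrow> (nat \<Rightarrow> 'g::finite \<Rightarrow> 'g \<Rightarrow> real) \<Rightarrow> 'g set \<Rightarrow> bool" where
  "closed_class A P C \<longleftrightarrow> ic_class A P C \<and>
     (\<forall>i\<in>C. \<forall>j. j \<noteq> i \<longrightarrow> communicates A P i j \<longrightarrow> j \<in> C)"

text \<open>Path space G^Z with the product sigma-algebra; coordinate process X_n(x) = x n.\<close>
definition path_space :: "(int \<Rightarrow> 'g) measure" where
  "path_space = PiM UNIV (\<lambda>_. count_space UNIV)"

definition past :: "int \<Rightarrow> (int \<Rightarrow> 'g) \<Rightarrow> nat \<Rightarrow> 'g" where
  "past n x = (\<lambda>k. x (n - int k))"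

definition past_algebra :: "int \<Rightarrow> (int \<Rightarrow> 'g) measure" where
  "past_algebra n = sigma (space path_space)
      {{x \<in> space path_space. x j \<in> B} | j B. j < n}"

text \<open>Compatibility: P(X_n = g | X_{n-1}, X_{n-2}, ...) = p(g | X_{n-1}, ...) a.s.,
  written out via the defining property of conditional probability:
  for every past event B,  P({X_n = g} \<inter> B) = E[1_B p(g | past)], together with
  measurability of the candidate version p(g | past n .) w.r.t. the past sigma-algebra.\<close>
definition compatible :: "('g::finite \<Rightarrow> (nat \<Rightarrow> 'g) \<Rightarrow> real) \<Rightarrow> (int \<Rightarrow> 'g) measure \<Rightarrow> bool" where
  "compatible p \<mu> \<longleftrightarrow> prob_space \<mu> \<and> sets \<mu> = sets path_space \<and>
     (\<forall>n g. (\<lambda>x. p g (past n x)) \<in> borel_measurable (past_algebra n) \<and>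
        (\<forall>B\<in>sets (past_algebra n).
           measure \<mu> ({x\<in>space \<mu>. x n = g} \<inter> B) = (\<integral>x. indicator B x * p g (past n x) \<partial>\<mu>)))"

definition compatible_laws :: "('g::finite \<Rightarrow> (nat \<Rightarrow> 'g) \<Rightarrow> real) \<Rightarrow> (int \<Rightarrow> 'g) measure set" where
  "compatible_laws p = {\<mu>. compatible p \<mu>}"

end

theory Submission
  imports Defs
begin

text \<open>Every closed class C carries its own compatible law. Run the chain from time -m on,
  with the whole past frozen at a state b of C; by closedness these finite-volume chains never
  leave C. As G is finite, along a diagonal subsequence of m all cylinder probabilities
  converge, and the limits form a consistent family whose projective limit is a law on G^Z
  giving X_0 \<in> C probability one. The finite-volume chains satisfy the compatibility identity
  exactly, and it survives the limit because the imitation kernel depends uniformly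
  continuously on the past: the weights \<theta>_k are summable, so up to a small error the kernel
  reads only a finite window of the past. Two disjoint closed classes thus give two distinct
  compatible laws.\<close>

section \<open>Communication classes\<close>

lemma mmult_id_right: "mmult Q (\<lambda>i j. if i = j then 1 else 0) = Q"
  by (simp add: mmult_def fun_eq_iff if_distrib sum.delta sum.delta' cong: if_cong)

lemma mmult_assoc: "mmult (mmult Q R) S = mmult Q (mmult R S)"
proof (intro ext)
  fix i j
  have "(\<Sum>l\<in>UNIV. (\<Sum>m\<in>UNIV. Q i m * R m l) * S l j) = (\<Sum>l\<in>UNIV. \<Sum>m\<in>UNIV. Q i m * R m l * S l j)"
    by (simp add: sum_distrib_right)
  also have "\<dots> = (\<Sum>m\<in>UNIV. \<Sum>l\<in>UNIV. Q i m * R m l * S l j)"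
    by (rule sum.swap)
  also have "\<dots> = (\<Sum>m\<in>UNIV. Q i m * (\<Sum>l\<in>UNIV. R m l * S l j))"
    by (simp add: sum_distrib_left mult.assoc)
  finally show "mmult (mmult Q R) S i j = mmult Q (mmult R S) i j"
    by (simp add: mmult_def)
qed

lemma word_matrix_append: "word_matrix P (as @ bs) = mmult (word_matrix P bs) (word_matrix P as)"
proof (induction as)
  case Nil then show ?case by (simp add: mmult_id_right)
next
  case (Cons a as) then show ?case by (simp add: mmult_assoc)
qed

lemma word_matrix_singleton: "word_matrix P [k] = P k"
proof (intro ext)
  fix i j
  have "(\<Sum>l\<in>UNIV. (if i = l then 1 else 0) * P k l j) = (\<Sum>l\<in>UNIV. if i = l then P k l j else 0)"
    by (rule sum.cong) auto
  then show "word_matrix P [k] i j = P k i j" by (simp add: mmult_def)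
qed

lemma word_matrix_nonneg:
  assumes "\<forall>k\<in>A. \<forall>i j. 0 \<le> P k i j" "set as \<subseteq> A"
  shows "0 \<le> word_matrix P as i j"
  using assms(2)
proof (induction as arbitrary: i j)
  case (Cons a as)
  then have "0 \<le> word_matrix P as i l * P a l j" for i l j
    using assms(1) by (intro mult_nonneg_nonneg) auto
  then show ?case by (simp add: mmult_def sum_nonneg)
qed simp

lemma communicates_trans:
  assumes P_nonneg: "\<forall>k\<in>A. \<forall>i j. 0 \<le> P k i j"
    and "communicates A P i l" "communicates A P l j"
  shows "communicates A P i j"
proof -
  obtain as where as: "as \<noteq> []" "set as \<subseteq> A" "word_matrix P as i l > 0"
    using assms(2) unfolding communicates_def by blast
  obtain bs where bs: "bs \<noteq> []" "set bs \<subseteq> A" "word_matrix P bs l j > 0"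
    using assms(3) unfolding communicates_def by blast
  have "word_matrix P as i l * word_matrix P bs l j
      \<le> (\<Sum>m\<in>UNIV. word_matrix P as i m * word_matrix P bs m j)"
    by (rule member_le_sum)
      (auto intro!: mult_nonneg_nonneg word_matrix_nonneg[OF P_nonneg as(2)] word_matrix_nonneg[OF P_nonneg bs(2)])
  also have "\<dots> = word_matrix P (bs @ as) i j"
    by (simp add: word_matrix_append mmult_def)
  finally have "word_matrix P (bs @ as) i j > 0"
    using as bs by (meson mult_pos_pos order_less_le_trans)
  then show ?thesis
    using as bs unfolding communicates_def by (intro exI[of _ "bs @ as"]) auto
qed

lemma intercommunicate_sym: "intercommunicate A P i j \<Longrightarrow> intercommunicate A P j i"
  unfolding intercommunicate_def by blast

lemma intercommunicate_trans:
  assumes "\<forall>k\<in>A. \<forall>i j. 0 \<le> P k i j"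
    and "intercommunicate A P i l" "intercommunicate A P l j"
  shows "intercommunicate A P i j"
  using assms(2,3) communicates_trans[OF assms(1)] unfolding intercommunicate_def by blast

lemma intercommunicate_classes_disjoint:
  assumes P_nonneg: "\<forall>k\<in>A. \<forall>i j. 0 \<le> P k i j"
    and "{j. intercommunicate A P i1 j} \<noteq> {j. intercommunicate A P i2 j}"
  shows "{j. intercommunicate A P i1 j} \<inter> {j. intercommunicate A P i2 j} = {}"
proof (rule ccontr)
  assume "{j. intercommunicate A P i1 j} \<inter> {j. intercommunicate A P i2 j} \<noteq> {}"
  then obtain x where x: "intercommunicate A P i1 x" "intercommunicate A P i2 x" by blast
  note trans = intercommunicate_trans[OF P_nonneg]
  have "intercommunicate A P i1 i2" using trans[OF x(1) intercommunicate_sym[OF x(2)]] .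
  moreover have "intercommunicate A P i2 i1" using trans[OF x(2) intercommunicate_sym[OF x(1)]] .
  ultimately have "intercommunicate A P i1 j \<longleftrightarrow> intercommunicate A P i2 j" for j
    using trans by blast
  with assms(2) show False by blast
qed

lemma closed_classes_disjoint:
  assumes "\<forall>k\<in>A. \<forall>i j. 0 \<le> P k i j"
    and "closed_class A P C1" "closed_class A P C2" "C1 \<noteq> C2"
  shows "C1 \<inter> C2 = {}"
proof -
  obtain i1 where "C1 = {j. intercommunicate A P i1 j}"
    using assms(2) unfolding closed_class_def ic_class_def by blast
  moreover obtain i2 where "C2 = {j. intercommunicate A P i2 j}"
    using assms(3) unfolding closed_class_def ic_class_def by blast
  ultimately show ?thesis using assms(4) intercommunicate_classes_disjoint[OF assms(1)] by simp
qed

lemma closed_class_nonempty: "closed_class A P C \<Longrightarrow> C \<noteq> {}"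
  by (auto simp: closed_class_def ic_class_def intercommunicate_def)

lemma closed_class_step:
  assumes "closed_class A P C" "k \<in> A" "i \<in> C" "P k i j > 0"
  shows "j \<in> C"
proof (cases "j = i")
  case False
  have "word_matrix P [k] i j > 0" using assms(4) by (simp only: word_matrix_singleton)
  then have "communicates A P i j"
    unfolding communicates_def using assms(2) by (intro exI[of _ "[k]"]) simp
  with False assms(1,3) show ?thesis unfolding closed_class_def by blast
qed (use assms(3) in simp)

locale imitation_params =
  fixes A :: "nat set" and \<theta> :: "nat \<Rightarrow> real" and P :: "nat \<Rightarrow> 'g::finite \<Rightarrow> 'g \<Rightarrow> real"
  assumes zero_notin_A: "0 \<notin> A"
    and \<theta>_pos: "\<forall>k\<in>A. \<theta> k > 0"
    and \<theta>_has_sum: "(\<theta> has_sum 1) A"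
    and P_stochastic: "\<forall>k\<in>A. stochastic_matrix (P k)"
begin

lemma P_nonneg: "\<forall>k\<in>A. \<forall>i j. 0 \<le> P k i j"
  using P_stochastic by (auto simp: stochastic_matrix_def)

lemma P_row_sum: "k \<in> A \<Longrightarrow> (\<Sum>j\<in>UNIV. P k i j) = 1"
  using P_stochastic by (auto simp: stochastic_matrix_def)

lemma P_le_1: "k \<in> A \<Longrightarrow> P k i j \<le> 1"
  using member_le_sum[of j UNIV "P k i"] P_nonneg P_row_sum by auto

lemma A_ge_1: "k \<in> A \<Longrightarrow> 1 \<le> k"
  using zero_notin_A by (cases k) auto

definition weight :: "nat \<Rightarrow> real" where
  "weight k = (if k \<in> A then \<theta> k else 0)"

definition summand :: "'g \<Rightarrow> (nat \<Rightarrow> 'g) \<Rightarrow> nat \<Rightarrow> real" where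
  "summand g w k = (if k \<in> A then \<theta> k * P k (w k) g else 0)"

lemma weight_sums: "weight sums 1"
proof -
  have "(\<theta> has_sum 1) A \<longleftrightarrow> (weight has_sum 1) UNIV"
    by (rule has_sum_cong_neutral) (auto simp: weight_def)
  then have "(weight has_sum 1) UNIV" using \<theta>_has_sum by simp
  then show ?thesis by (rule has_sum_imp_sums)
qed

lemma summable_weight: "summable weight"
  using weight_sums by (rule sums_summable)

lemma summand_nonneg: "0 \<le> summand g w k"
  using \<theta>_pos P_nonneg by (auto simp: summand_def less_imp_le)

lemma summand_le_weight: "summand g w k \<le> weight k"
  using \<theta>_pos P_le_1 by (auto simp: summand_def weight_def less_imp_le intro: mult_left_le)

lemma summable_summand: "summable (summand g w)"
  by (rule summable_comparison_test'[OF summable_weight])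
    (use summand_nonneg summand_le_weight in auto)

lemma imitation_kernel_eq_suminf: "imitation_kernel A \<theta> P g w = (\<Sum>k. summand g w k)"
proof -
  have "imitation_kernel A \<theta> P g w = infsum (summand g w) UNIV"
    unfolding imitation_kernel_def by (rule infsum_cong_neutral) (auto simp: summand_def)
  also have "\<dots> = (\<Sum>k. summand g w k)"
    using sums_nonneg_imp_has_sum[OF summable_sums[OF summable_summand] summand_nonneg]
    by (simp add: has_sum_iff)
  finally show ?thesis .
qed

lemma imitation_kernel_nonneg: "0 \<le> imitation_kernel A \<theta> P g w"
  unfolding imitation_kernel_eq_suminf by (rule suminf_nonneg[OF summable_summand summand_nonneg])

lemma sum_imitation_kernel: "(\<Sum>g\<in>UNIV. imitation_kernel A \<theta> P g w) = 1"
proof -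
  have row: "(\<Sum>g\<in>UNIV. summand g w k) = weight k" for k
    using P_row_sum[of k "w k"] by (simp add: summand_def weight_def sum_distrib_left[symmetric])
  have "(\<Sum>g\<in>UNIV. imitation_kernel A \<theta> P g w) = (\<Sum>k. \<Sum>g\<in>UNIV. summand g w k)"
    unfolding imitation_kernel_eq_suminf by (rule suminf_sum[OF summable_summand, symmetric])
  also have "\<dots> = 1"
    unfolding row using weight_sums by (rule sums_unique[symmetric])
  finally show ?thesis .
qed

lemma imitation_kernel_cong_past:
  assumes "\<And>k. k \<ge> 1 \<Longrightarrow> w k = w' k"
  shows "imitation_kernel A \<theta> P g w = imitation_kernel A \<theta> P g w'"
proof -
  have "summand g w = summand g w'"
    using assms A_ge_1 by (auto simp: summand_def fun_eq_iff)
  then show ?thesis by (simp add: imitation_kernel_eq_suminf)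
qed

lemma imitation_kernel_diff_le_tail:
  assumes "\<forall>k. 1 \<le> k \<and> k \<le> L \<longrightarrow> w k = w' k"
  shows "\<bar>imitation_kernel A \<theta> P g w - imitation_kernel A \<theta> P g w'\<bar> \<le> (\<Sum>i. weight (i + Suc L))"
proof -
  define d where "d k = summand g w k - summand g w' k" for k
  have d_head: "d k = 0" if "k < Suc L" for k
    using that assms A_ge_1 by (auto simp: d_def summand_def)
  have d_bound: "\<bar>d k\<bar> \<le> weight k" for k
    using summand_nonneg[of g w k] summand_le_weight[of g w k]
      summand_nonneg[of g w' k] summand_le_weight[of g w' k]
    by (simp add: d_def abs_le_iff)
  have "summable d"
    unfolding d_def by (intro summable_diff summable_summand)
  then have "imitation_kernel A \<theta> P g w - imitation_kernel A \<theta> P g w' = (\<Sum>i. d (i + Suc L))"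
    unfolding imitation_kernel_eq_suminf d_def[symmetric] suminf_diff[OF summable_summand summable_summand]
    using suminf_split_initial_segment[of d "Suc L"] d_head by simp
  also have "\<bar>\<dots>\<bar> \<le> (\<Sum>i. weight (i + Suc L))"
  proof -
    have "summable (\<lambda>k. \<bar>d k\<bar>)"
      by (rule summable_comparison_test'[OF summable_weight]) (use d_bound in auto)
    then have tail: "summable (\<lambda>i. \<bar>d (i + Suc L)\<bar>)"
      by (rule summable_ignore_initial_segment)
    have "\<bar>\<Sum>i. d (i + Suc L)\<bar> \<le> (\<Sum>i. \<bar>d (i + Suc L)\<bar>)"
      by (rule summable_rabs[OF tail])
    also have "\<dots> \<le> (\<Sum>i. weight (i + Suc L))"
      by (rule suminf_le[OF d_bound tail summable_ignore_initial_segment[OF summable_weight]])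
    finally show ?thesis .
  qed
  finally show ?thesis .
qed

lemma imitation_kernel_continuous:
  assumes "\<epsilon> > 0"
  shows "\<exists>L. \<forall>w w'. (\<forall>k. 1 \<le> k \<and> k \<le> L \<longrightarrow> w k = w' k) \<longrightarrow>
      \<bar>imitation_kernel A \<theta> P g w - imitation_kernel A \<theta> P g w'\<bar> \<le> \<epsilon>"
proof -
  obtain N where "\<forall>n\<ge>N. norm (\<Sum>i. weight (i + n)) < \<epsilon>"
    using suminf_exist_split[OF assms summable_weight] by blast
  then have "norm (\<Sum>i. weight (i + Suc N)) < \<epsilon>" by (meson le_SucI order_refl)
  then have "(\<Sum>i. weight (i + Suc N)) \<le> \<epsilon>" by simp
  then show ?thesis using imitation_kernel_diff_le_tail by (meson order_trans)
qed

lemma imitation_kernel_closed_class: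
  assumes C: "closed_class A P C" and "g \<notin> C" and w: "\<And>k. k \<ge> 1 \<Longrightarrow> w k \<in> C"
  shows "imitation_kernel A \<theta> P g w = 0"
proof -
  have "P k (w k) g = 0" if "k \<in> A" for k
  proof -
    have "\<not> P k (w k) g > 0"
      using closed_class_step[OF C that w[OF A_ge_1[OF that]]] \<open>g \<notin> C\<close> by blast
    moreover have "0 \<le> P k (w k) g" using P_nonneg that by blast
    ultimately show ?thesis by linarith
  qed
  then have "summand g w = (\<lambda>_. 0)" by (auto simp: summand_def)
  then show ?thesis by (simp add: imitation_kernel_eq_suminf)
qed

end

section \<open>Finite-volume chains of a continuous kernel\<close>

definition depends_on :: "'i set \<Rightarrow> (('i \<Rightarrow> 'a) \<Rightarrow> 'b) \<Rightarrow> bool" where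
  "depends_on J f \<longleftrightarrow> (\<forall>x y. (\<forall>t\<in>J. x t = y t) \<longrightarrow> f x = f y)"

lemma depends_onD: "depends_on J f \<Longrightarrow> (\<And>t. t \<in> J \<Longrightarrow> x t = y t) \<Longrightarrow> f x = f y"
  unfolding depends_on_def by blast

lemma depends_on_mono: "depends_on J f \<Longrightarrow> J \<subseteq> J' \<Longrightarrow> depends_on J' f"
  unfolding depends_on_def by blast

lemma depends_on_mult: "depends_on J f \<Longrightarrow> depends_on J g \<Longrightarrow> depends_on J (\<lambda>x. f x * g x)"
  unfolding depends_on_def by metis

lemma depends_on_upd: "depends_on J f \<Longrightarrow> t \<notin> J \<Longrightarrow> f (x(t := a)) = f x"
  unfolding depends_on_def by (metis fun_upd_other)

definition cylinder :: "'i set \<Rightarrow> ('i \<Rightarrow> 'a) \<Rightarrow> ('i \<Rightarrow> 'a) set" where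
  "cylinder J z = {x. \<forall>t\<in>J. x t = z t}"

locale continuous_kernel =
  fixes p :: "'g::finite \<Rightarrow> (nat \<Rightarrow> 'g) \<Rightarrow> real" and b :: 'g
  assumes nonneg: "0 \<le> p g w"
    and sum_eq_1: "(\<Sum>g\<in>UNIV. p g w) = 1"
    and cong_past: "(\<And>k. k \<ge> 1 \<Longrightarrow> w k = w' k) \<Longrightarrow> p g w = p g w'"
    and continuous: "\<epsilon> > 0 \<Longrightarrow> \<exists>L. \<forall>w w'. (\<forall>k. 1 \<le> k \<and> k \<le> L \<longrightarrow> w k = w' k) \<longrightarrow> \<bar>p g w - p g w'\<bar> \<le> \<epsilon>"
begin

lemma le_1: "p g w \<le> 1"
  using member_le_sum[of g UNIV "\<lambda>g. p g w"] nonneg sum_eq_1 by simp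

lemma depends_on_past: "depends_on {..<n} (\<lambda>x. p g (past n x))"
  unfolding depends_on_def past_def by (auto intro!: cong_past)

text \<open>The state b is the boundary condition: the finite-volume chains start from the
  constant path b.\<close>

definition frozen_outside :: "int set \<Rightarrow> (int \<Rightarrow> 'g) set" where
  "frozen_outside J = {x. \<forall>t. t \<notin> J \<longrightarrow> x t = b}"

lemma frozen_outside_eq_image:
  "frozen_outside J = (\<lambda>y t. if t \<in> J then y t else b) ` (PiE J (\<lambda>_. UNIV))"
proof (intro equalityI subsetI)
  fix x assume "x \<in> frozen_outside J"
  then have "x = (\<lambda>t. if t \<in> J then restrict x J t else b)"
    by (auto simp: frozen_outside_def fun_eq_iff)
  then show "x \<in> (\<lambda>y t. if t \<in> J then y t else b) ` (PiE J (\<lambda>_. UNIV))" by force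
qed (auto simp: frozen_outside_def)

lemma finite_frozen_outside: "finite J \<Longrightarrow> finite (frozen_outside J)"
  unfolding frozen_outside_eq_image by (intro finite_imageI finite_PiE) auto

lemma sum_indicator_cylinder:
  fixes f :: "(int \<Rightarrow> 'g) \<Rightarrow> real"
  assumes J: "finite J" and f: "depends_on J f"
  shows "(\<Sum>z\<in>frozen_outside J. f z * indicator (cylinder J z) x) = f x"
proof -
  define r where "r = (\<lambda>t. if t \<in> J then x t else b)"
  have r: "r \<in> frozen_outside J" by (auto simp: r_def frozen_outside_def)
  have "f z * indicator (cylinder J z) x = (if z = r then f z else 0)" if "z \<in> frozen_outside J" for z
  proof -
    have "x \<in> cylinder J z \<longleftrightarrow> z = r"
      using that by (auto simp: cylinder_def r_def frozen_outside_def fun_eq_iff)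
    then show ?thesis by (simp add: indicator_def)
  qed
  then have "(\<Sum>z\<in>frozen_outside J. f z * indicator (cylinder J z) x)
      = (\<Sum>z\<in>frozen_outside J. if z = r then f z else 0)"
    by (rule sum.cong[OF refl])
  also have "\<dots> = f r" using r finite_frozen_outside[OF J] by simp
  also have "\<dots> = f x" by (rule depends_onD[OF f]) (simp add: r_def)
  finally show ?thesis .
qed

lemma sum_frozen_outside_insert:
  assumes "t \<notin> J"
  shows "(\<Sum>x\<in>frozen_outside (insert t J). h x) = (\<Sum>x\<in>frozen_outside J. \<Sum>g\<in>UNIV. h (x(t := g)))"
proof -
  let ?upd = "\<lambda>(x, g). x(t := g)"
  have image: "frozen_outside (insert t J) = ?upd ` (frozen_outside J \<times> UNIV)"
  proof (intro equalityI subsetI)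
    fix y assume "y \<in> frozen_outside (insert t J)"
    then have "y(t := b) \<in> frozen_outside J" "y = ?upd (y(t := b), y t)"
      by (auto simp: frozen_outside_def)
    then show "y \<in> ?upd ` (frozen_outside J \<times> UNIV)" by blast
  qed (auto simp: frozen_outside_def)
  have "inj_on ?upd (frozen_outside J \<times> UNIV)"
  proof (rule inj_onI, clarify)
    fix x g x' g' assume "x \<in> frozen_outside J" "x' \<in> frozen_outside J"
      and eq: "x(t := g) = x'(t := g')"
    then have "x t = x' t" using assms by (simp add: frozen_outside_def)
    with eq show "x = x' \<and> g = g'" by (metis fun_upd_idem fun_upd_upd fun_upd_same)
  qed
  then have "(\<Sum>x\<in>frozen_outside (insert t J). h x) = (\<Sum>z\<in>frozen_outside J \<times> UNIV. h (?upd z))"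
    unfolding image by (rule sum.reindex[unfolded comp_def])
  also have "\<dots> = (\<Sum>x\<in>frozen_outside J. \<Sum>g\<in>UNIV. h (x(t := g)))"
    by (simp add: sum.cartesian_product case_prod_unfold)
  finally show ?thesis .
qed

text \<open>box_weight m T x is the probability that the chain started at time -m from the
  constant past b follows x up to time T.\<close>

definition box_weight :: "nat \<Rightarrow> int \<Rightarrow> (int \<Rightarrow> 'g) \<Rightarrow> real" where
  "box_weight m T x = (\<Prod>t\<in>{- int m..T}. p (x t) (past t x))"

definition box_expectation :: "nat \<Rightarrow> int \<Rightarrow> ((int \<Rightarrow> 'g) \<Rightarrow> real) \<Rightarrow> real" where
  "box_expectation m T f = (\<Sum>x\<in>frozen_outside {- int m..T}. box_weight m T x * f x)"

lemma box_weight_nonneg: "0 \<le> box_weight m T x"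
  unfolding box_weight_def by (intro prod_nonneg) (auto simp: nonneg)

lemma box_weight_extend:
  assumes "- int m - 1 \<le> T"
  shows "box_weight m (T + 1) (x(T + 1 := g)) = box_weight m T x * p g (past (T + 1) x)"
proof -
  have box: "{- int m..T + 1} = insert (T + 1) {- int m..T}" using assms by auto
  have "p g (past (T + 1) (x(T + 1 := g))) = p g (past (T + 1) x)"
    by (rule cong_past) (simp add: past_def)
  moreover have "(\<Prod>t\<in>{- int m..T}. p ((x(T + 1 := g)) t) (past t (x(T + 1 := g)))) = box_weight m T x"
    unfolding box_weight_def by (intro prod.cong) (auto simp: past_def fun_eq_iff)
  ultimately show ?thesis
    unfolding box_weight_def box by (simp add: mult.commute)
qed

lemma box_expectation_extend:
  assumes "- int m - 1 \<le> T"
  shows "box_expectation m (T + 1) f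
    = (\<Sum>x\<in>frozen_outside {- int m..T}. box_weight m T x * (\<Sum>g\<in>UNIV. p g (past (T + 1) x) * f (x(T + 1 := g))))"
proof -
  have box: "{- int m..T + 1} = insert (T + 1) {- int m..T}" using assms by auto
  have "T + 1 \<notin> {- int m..T}" by simp
  then show ?thesis
    unfolding box_expectation_def box sum_frozen_outside_insert[OF \<open>T + 1 \<notin> {- int m..T}\<close>]
    by (simp add: box_weight_extend[OF assms] sum_distrib_left mult.assoc)
qed

lemma box_expectation_horizon:
  assumes f: "depends_on {..T} f" and "- int m - 1 \<le> T" "T \<le> T'"
  shows "box_expectation m T' f = box_expectation m T f"
  using assms(3)
proof (induction T' rule: int_ge_induct)
  case (step i)
  have i: "- int m - 1 \<le> i" using step(1) assms(2) by simp
  have "f (x(i + 1 := g)) = f x" for x g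
    using step(1) by (intro depends_on_upd[OF f]) auto
  then have "box_expectation m (i + 1) f
      = (\<Sum>x\<in>frozen_outside {- int m..i}. box_weight m i x * ((\<Sum>g\<in>UNIV. p g (past (i + 1) x)) * f x))"
    unfolding box_expectation_extend[OF i] by (simp add: sum_distrib_right)
  also have "\<dots> = box_expectation m i f"
    by (simp only: sum_eq_1 mult_1 box_expectation_def)
  finally show ?case using step by simp
qed simp

lemma box_expectation_start: "box_expectation m (- int m - 1) f = f (\<lambda>_. b)"
proof -
  have "frozen_outside {- int m..- int m - 1} = {\<lambda>_. b}"
    by (auto simp: frozen_outside_def)
  then show ?thesis by (simp add: box_expectation_def box_weight_def)
qed

lemma box_expectation_1:
  assumes "- int m - 1 \<le> T"
  shows "box_expectation m T (\<lambda>_. 1) = 1"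
proof -
  have "depends_on {..- int m - 1} (\<lambda>_. 1 :: real)" by (simp add: depends_on_def)
  from box_expectation_horizon[OF this order_refl assms] show ?thesis
    by (simp only: box_expectation_start)
qed

lemma box_expectation_abs_diff_le:
  assumes "- int m - 1 \<le> T" and "\<And>x. \<bar>f x - f' x\<bar> \<le> \<epsilon>"
  shows "\<bar>box_expectation m T f - box_expectation m T f'\<bar> \<le> \<epsilon>"
proof -
  have "\<bar>box_expectation m T f - box_expectation m T f'\<bar>
      = \<bar>\<Sum>x\<in>frozen_outside {- int m..T}. box_weight m T x * (f x - f' x)\<bar>"
    by (simp add: box_expectation_def right_diff_distrib sum_subtractf)
  also have "\<dots> \<le> (\<Sum>x\<in>frozen_outside {- int m..T}. box_weight m T x * \<epsilon>)"
    by (rule order_trans[OF sum_abs sum_mono])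
      (simp add: abs_mult box_weight_nonneg assms(2) mult_left_mono)
  also have "\<dots> = \<epsilon> * box_expectation m T (\<lambda>_. 1)"
    by (simp add: box_expectation_def sum_distrib_left mult.commute)
  finally show ?thesis using box_expectation_1[OF assms(1)] by simp
qed

lemma box_expectation_sum:
  "box_expectation m T (\<lambda>x. \<Sum>y\<in>Y. c y * h y x) = (\<Sum>y\<in>Y. c y * box_expectation m T (h y))"
  unfolding box_expectation_def sum_distrib_left
  by (subst sum.swap) (simp add: algebra_simps)

text \<open>The finite-volume form of the compatibility identity: conditioning on the past
  before time n replaces the indicator of the event x n = g by the kernel.\<close>

lemma box_expectation_next_state:
  assumes f: "depends_on {..<n} f" and n: "- int m \<le> n" "n \<le> T"
  shows "box_expectation m T (\<lambda>x. f x * of_bool (x n = g))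
    = box_expectation m T (\<lambda>x. f x * p g (past n x))"
proof -
  have f_upd: "f (x(n := a)) = f x" for x a by (rule depends_on_upd[OF f]) simp
  have "depends_on {..n} (\<lambda>x. f x * of_bool (x n = g))"
    by (rule depends_on_mult[OF depends_on_mono[OF f]]) (auto simp: depends_on_def)
  then have "box_expectation m T (\<lambda>x. f x * of_bool (x n = g))
      = box_expectation m ((n - 1) + 1) (\<lambda>x. f x * of_bool (x n = g))"
    using box_expectation_horizon[of n _ m T] n by simp
  also have "\<dots> = box_expectation m (n - 1) (\<lambda>x. f x * p g (past n x))"
  proof -
    have "(\<Sum>a\<in>UNIV. p a (past n x) * (f (x(n := a)) * of_bool ((x(n := a)) n = g)))
        = f x * p g (past n x)" for x
      by (simp add: f_upd of_bool_def if_distrib cong: if_cong)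
    moreover have "- int m - 1 \<le> n - 1" using n by simp
    ultimately show ?thesis
      unfolding box_expectation_extend[OF \<open>- int m - 1 \<le> n - 1\<close>] by (simp add: box_expectation_def)
  qed
  also have "\<dots> = box_expectation m T (\<lambda>x. f x * p g (past n x))"
  proof -
    have "depends_on {..n - 1} (\<lambda>x. f x * p g (past n x))"
      by (rule depends_on_mono[OF depends_on_mult[OF f depends_on_past]]) auto
    from box_expectation_horizon[OF this _ _, of m T] n show ?thesis by simp
  qed
  finally show ?thesis .
qed

definition absorbing :: "'g set \<Rightarrow> bool" where
  "absorbing C \<longleftrightarrow> (\<forall>g w. g \<notin> C \<longrightarrow> (\<forall>k\<ge>1. w k \<in> C) \<longrightarrow> p g w = 0)"

lemma box_weight_support:
  assumes C: "absorbing C" "b \<in> C" and x: "x \<in> frozen_outside {- int m..T}"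
    and "box_weight m T x \<noteq> 0"
  shows "x t \<in> C"
proof (rule ccontr)
  define S where "S = {t. x t \<notin> C}"
  assume "x t \<notin> C"
  then have "t \<in> S" by (simp add: S_def)
  have S: "S \<subseteq> {- int m..T}" using x C(2) by (force simp: S_def frozen_outside_def)
  then have "finite S" by (rule finite_subset) simp
  define t0 where "t0 = Min S"
  have t0: "t0 \<in> S" using \<open>finite S\<close> \<open>t \<in> S\<close> unfolding t0_def by (intro Min_in) auto
  have "x s \<in> C" if "s < t0" for s
    using that Min_le[OF \<open>finite S\<close>, of s] unfolding t0_def S_def by force
  then have "p (x t0) (past t0 x) = 0"
    using t0 C(1) unfolding absorbing_def S_def past_def by auto
  then have "box_weight m T x = 0"
    using t0 S unfolding box_weight_def by (intro prod_zero) auto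
  with assms(4) show False by simp
qed

lemma box_expectation_cong_absorbing:
  assumes "absorbing C" "b \<in> C" and "\<And>x. (\<forall>t. x t \<in> C) \<Longrightarrow> f x = f' x"
  shows "box_expectation m T f = box_expectation m T f'"
  unfolding box_expectation_def
proof (rule sum.cong[OF refl])
  fix x assume x: "x \<in> frozen_outside {- int m..T}"
  show "box_weight m T x * f x = box_weight m T x * f' x"
    using box_weight_support[OF assms(1,2) x] assms(3) by (cases "box_weight m T x = 0") auto
qed

end

section \<open>The infinite-volume limit\<close>

lemma bounded_family_convergent_subseq:
  fixes u :: "nat \<Rightarrow> 'k \<Rightarrow> real"
  assumes K: "countable K" and bounded: "\<And>m \<kappa>. \<bar>u m \<kappa>\<bar> \<le> 1"
  shows "\<exists>r. strict_mono r \<and> (\<forall>\<kappa>\<in>K. convergent (\<lambda>i. u (r i) \<kappa>))"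
proof (cases "K = {}")
  case True then show ?thesis using strict_mono_id by blast
next
  case False
  define e where "e = from_nat_into K"
  interpret subseqs "\<lambda>n s. convergent (\<lambda>i. u (s i) (e n))"
  proof
    fix n and s :: "nat \<Rightarrow> nat"
    have "bounded (range (\<lambda>i. u (s i) (e n)))"
      unfolding bounded_iff using bounded by (intro exI[of _ 1]) auto
    then obtain l r where "strict_mono r" "((\<lambda>i. u (s i) (e n)) \<circ> r) \<longlonglongrightarrow> l"
      using bounded_imp_convergent_subsequence by blast
    then show "\<exists>r'. strict_mono r' \<and> convergent (\<lambda>i. u ((s \<circ> r') i) (e n))"
      by (auto simp: convergent_def o_def)
  qed
  have "convergent (\<lambda>i. u (diagseq i) (e n))" for n
  proof -
    have "convergent (\<lambda>i. u ((diagseq \<circ> (+) (Suc n)) i) (e n))"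
    proof (rule diagseq_holds)
      fix r s n assume "strict_mono (r :: nat \<Rightarrow> nat)" "convergent (\<lambda>i. u (s i) (e n))"
      then show "convergent (\<lambda>i. u ((s \<circ> r) i) (e n))"
        by (auto simp: convergent_def o_def intro: LIMSEQ_subseq_LIMSEQ[unfolded o_def])
    qed
    then obtain l where "(\<lambda>i. u (diagseq (i + Suc n)) (e n)) \<longlonglongrightarrow> l"
      by (auto simp: convergent_def o_def ac_simps)
    then have "(\<lambda>i. u (diagseq i) (e n)) \<longlonglongrightarrow> l" by (rule LIMSEQ_offset)
    then show ?thesis by (auto simp: convergent_def)
  qed
  moreover have "\<kappa> \<in> K \<Longrightarrow> \<exists>n. e n = \<kappa>" for \<kappa>
    using from_nat_into_surj[OF K] e_def by blast
  ultimately show ?thesis using subseq_diagseq by blast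
qed

abbreviation window :: "nat \<Rightarrow> int set" where
  "window N \<equiv> {- int N..int N}"

context continuous_kernel
begin

definition cylinder_prob :: "nat \<Rightarrow> nat \<times> (int \<Rightarrow> 'g) \<Rightarrow> real" where
  "cylinder_prob m \<kappa> = box_expectation m (int (fst \<kappa>)) (indicator (cylinder (window (fst \<kappa>)) (snd \<kappa>)))"

definition cylinder_keys :: "(nat \<times> (int \<Rightarrow> 'g)) set" where
  "cylinder_keys = (\<Union>N. {N} \<times> frozen_outside (window N))"

lemma cylinder_prob_nonneg: "0 \<le> cylinder_prob m \<kappa>"
  unfolding cylinder_prob_def box_expectation_def
  by (intro sum_nonneg mult_nonneg_nonneg box_weight_nonneg) auto

lemma cylinder_prob_le_1: "\<bar>cylinder_prob m \<kappa>\<bar> \<le> 1"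
  using box_expectation_abs_diff_le[of m "int (fst \<kappa>)" "indicator (cylinder (window (fst \<kappa>)) (snd \<kappa>))" "\<lambda>_. 0" 1]
  by (simp add: cylinder_prob_def box_expectation_def indicator_def)

definition diag_subseq :: "nat \<Rightarrow> nat" where
  "diag_subseq = (SOME r. strict_mono r \<and> (\<forall>\<kappa>\<in>cylinder_keys. convergent (\<lambda>i. cylinder_prob (r i) \<kappa>)))"

lemma diag_subseq: "strict_mono diag_subseq" "\<kappa> \<in> cylinder_keys \<Longrightarrow> convergent (\<lambda>i. cylinder_prob (diag_subseq i) \<kappa>)"
proof -
  have "countable cylinder_keys"
    unfolding cylinder_keys_def using finite_frozen_outside
    by (intro countable_UN) (auto intro: countable_finite)
  from bounded_family_convergent_subseq[OF this cylinder_prob_le_1]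
  have "strict_mono diag_subseq \<and> (\<forall>\<kappa>\<in>cylinder_keys. convergent (\<lambda>i. cylinder_prob (diag_subseq i) \<kappa>))"
    unfolding diag_subseq_def by (rule someI_ex)
  then show "strict_mono diag_subseq" "\<kappa> \<in> cylinder_keys \<Longrightarrow> convergent (\<lambda>i. cylinder_prob (diag_subseq i) \<kappa>)"
    by auto
qed

definition limit_expectation :: "nat \<Rightarrow> ((int \<Rightarrow> 'g) \<Rightarrow> real) \<Rightarrow> real" where
  "limit_expectation N f = (\<Sum>y\<in>frozen_outside (window N). lim (\<lambda>i. cylinder_prob (diag_subseq i) (N, y)) * f y)"

lemma box_expectation_window:
  assumes "depends_on (window N) f"
  shows "box_expectation m (int N) f = (\<Sum>y\<in>frozen_outside (window N). f y * cylinder_prob m (N, y))"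
proof -
  have "box_expectation m (int N) f
      = box_expectation m (int N) (\<lambda>x. \<Sum>y\<in>frozen_outside (window N). f y * indicator (cylinder (window N) y) x)"
    using sum_indicator_cylinder[OF _ assms] by simp
  then show ?thesis by (simp add: box_expectation_sum cylinder_prob_def)
qed

lemma box_expectation_tendsto:
  assumes "depends_on (window N) f"
  shows "(\<lambda>i. box_expectation (diag_subseq i) (int N) f) \<longlonglongrightarrow> limit_expectation N f"
  unfolding box_expectation_window[OF assms] limit_expectation_def
  using diag_subseq(2) by (auto simp: cylinder_keys_def mult.commute convergent_LIMSEQ_iff intro!: tendsto_sum tendsto_mult_left)

lemma limit_expectation_window_mono:
  assumes "depends_on (window N) f" "N \<le> N'"
  shows "limit_expectation N' f = limit_expectation N f"
proof -
  have "window N \<subseteq> window N'" using assms(2) by auto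
  then have f': "depends_on (window N') f" using assms(1) by (rule depends_on_mono[rotated])
  have "box_expectation (diag_subseq i) (int N') f = box_expectation (diag_subseq i) (int N) f" for i
    using assms by (intro box_expectation_horizon depends_on_mono[OF assms(1)]) auto
  then show ?thesis
    using box_expectation_tendsto[OF f'] box_expectation_tendsto[OF assms(1)] LIMSEQ_unique by auto
qed

lemma limit_expectation_cong_absorbing:
  assumes "absorbing C" "b \<in> C" "depends_on (window N) f" "depends_on (window N) f'"
    and "\<And>x. (\<forall>t. x t \<in> C) \<Longrightarrow> f x = f' x"
  shows "limit_expectation N f = limit_expectation N f'"
  using box_expectation_tendsto[OF assms(3)] box_expectation_tendsto[OF assms(4)]
    box_expectation_cong_absorbing[OF assms(1,2,5)] LIMSEQ_unique by auto

lemma limit_expectation_1: "limit_expectation N (\<lambda>_. 1) = 1"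
  using box_expectation_tendsto[of N "\<lambda>_. 1"] box_expectation_1[of _ "int N"]
  by (simp add: depends_on_def LIMSEQ_const_iff)

lemma limit_expectation_nonneg: "(\<And>x. 0 \<le> f x) \<Longrightarrow> 0 \<le> limit_expectation N f"
  unfolding limit_expectation_def
  by (intro sum_nonneg mult_nonneg_nonneg LIMSEQ_le_const[OF convergent_LIMSEQ_iff[THEN iffD1]])
    (auto intro: diag_subseq(2) cylinder_prob_nonneg simp: cylinder_keys_def)

lemma limit_expectation_sum:
  "limit_expectation N (\<lambda>x. \<Sum>y\<in>Y. c y * h y x) = (\<Sum>y\<in>Y. c y * limit_expectation N (h y))"
  unfolding limit_expectation_def sum_distrib_left
  by (subst sum.swap) (simp add: algebra_simps)

lemma limit_expectation_abs_diff_le: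
  assumes "depends_on (window N) f" "depends_on (window N) f'"
    and "\<And>i. i \<ge> i0 \<Longrightarrow> \<bar>box_expectation (diag_subseq i) (int N) f - box_expectation (diag_subseq i) (int N) f'\<bar> \<le> \<epsilon>"
  shows "\<bar>limit_expectation N f - limit_expectation N f'\<bar> \<le> \<epsilon>"
  by (rule LIMSEQ_le_const2[OF tendsto_rabs[OF tendsto_diff[OF box_expectation_tendsto[OF assms(1)]
      box_expectation_tendsto[OF assms(2)]]]]) (use assms(3) in blast)

end

definition radius :: "int set \<Rightarrow> nat" where
  "radius J = Max (insert 0 ((\<lambda>t. nat \<bar>t\<bar>) ` J))"

lemma subset_window_radius: "finite J \<Longrightarrow> J \<subseteq> window (radius J)"
proof
  fix t assume "finite J" "t \<in> J"
  then have "nat \<bar>t\<bar> \<le> radius J" unfolding radius_def by (intro Max_ge) auto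
  then show "t \<in> window (radius J)" by auto
qed

lemma radius_le: "finite J \<Longrightarrow> J \<subseteq> window N \<Longrightarrow> radius J \<le> N"
  unfolding radius_def by (intro Max.boundedI) (auto simp: nat_le_iff abs_le_iff)

lemma radius_mono: "finite H \<Longrightarrow> J \<subseteq> H \<Longrightarrow> radius J \<le> radius H"
  using subset_window_radius[of H] finite_subset by (intro radius_le) auto

text \<open>The projective-limit theorem is stated for Polish coordinate spaces, hence the detour
  through the discrete topology on 'g.\<close>

definition to_discrete :: "int set \<Rightarrow> (int \<Rightarrow> 'g) \<Rightarrow> (int \<Rightarrow> 'g discrete)" where
  "to_discrete J y = restrict (\<lambda>t. discrete (y t)) J"

definition of_discrete_path :: "(int \<Rightarrow> 'g discrete) \<Rightarrow> (int \<Rightarrow> 'g)" where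
  "of_discrete_path x = (\<lambda>t. of_discrete (x t))"

lemma to_discrete_in_space: "to_discrete J y \<in> space (PiM J (\<lambda>_. borel :: 'g discrete measure))"
  by (simp add: to_discrete_def space_PiM)

lemma depends_on_to_discrete: "J \<subseteq> J' \<Longrightarrow> depends_on J' (\<lambda>y. F (to_discrete J y))"
  unfolding depends_on_def to_discrete_def by (metis restrict_ext subsetD)

context continuous_kernel
begin

definition marginal :: "int set \<Rightarrow> (int \<Rightarrow> 'g discrete) measure" where
  "marginal J = distr (point_measure (frozen_outside (window (radius J)))
      (\<lambda>y. ennreal (lim (\<lambda>i. cylinder_prob (diag_subseq i) (radius J, y)))))
    (PiM J (\<lambda>_. borel)) (to_discrete J)"

lemma sets_marginal: "sets (marginal J) = sets (PiM J (\<lambda>_. borel))"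
  by (simp add: marginal_def)

lemma limit_expectation_indicator:
  "limit_expectation N (indicator S)
    = (\<Sum>y\<in>frozen_outside (window N) \<inter> S. lim (\<lambda>i. cylinder_prob (diag_subseq i) (N, y)))"
  unfolding limit_expectation_def using finite_frozen_outside
  by (simp add: sum.inter_restrict indicator_def of_bool_def if_distrib cong: if_cong)

lemma lim_cylinder_prob_nonneg:
  "y \<in> frozen_outside (window N) \<Longrightarrow> 0 \<le> lim (\<lambda>i. cylinder_prob (diag_subseq i) (N, y))"
  using limit_expectation_nonneg[of "indicator {y}" N]
  by (simp add: limit_expectation_indicator)

lemma emeasure_marginal:
  assumes J: "finite J" and N: "radius J \<le> N" and X: "X \<in> sets (PiM J (\<lambda>_. borel))"
  shows "emeasure (marginal J) X = ennreal (limit_expectation N (\<lambda>y. indicator X (to_discrete J y)))"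
proof -
  let ?N = "radius J"
  have "emeasure (marginal J) X
      = (\<Sum>y\<in>frozen_outside (window ?N) \<inter> to_discrete J -` X. ennreal (lim (\<lambda>i. cylinder_prob (diag_subseq i) (?N, y))))"
    unfolding marginal_def using X finite_frozen_outside
    by (simp add: emeasure_distr space_point_measure to_discrete_in_space
        emeasure_point_measure_finite Int_commute)
  also have "\<dots> = ennreal (limit_expectation ?N (indicator (to_discrete J -` X)))"
    unfolding limit_expectation_indicator by (rule sum_ennreal) (auto intro: lim_cylinder_prob_nonneg)
  also have "indicator (to_discrete J -` X) = (\<lambda>y. indicator X (to_discrete J y) :: real)"
    by (auto simp: indicator_def)
  also have "limit_expectation ?N \<dots> = limit_expectation N (\<lambda>y. indicator X (to_discrete J y))"
    using N by (intro limit_expectation_window_mono[symmetric] depends_on_to_discrete subset_window_radius J)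
  finally show ?thesis .
qed

lemma prob_space_marginal:
  assumes "finite J" shows "prob_space (marginal J)"
proof
  have "emeasure (marginal J) (space (marginal J))
      = ennreal (limit_expectation (radius J) (\<lambda>y. indicator (space (PiM J (\<lambda>_. borel))) (to_discrete J y)))"
    using sets_eq_imp_space_eq[OF sets_marginal] by (simp add: emeasure_marginal[OF assms])
  also have "(\<lambda>y. indicator (space (PiM J (\<lambda>_. borel :: 'g discrete measure))) (to_discrete J y) :: real) = (\<lambda>_. 1)"
    by (rule ext) (simp add: indicator_def to_discrete_in_space)
  finally show "emeasure (marginal J) (space (marginal J)) = 1" by (simp add: limit_expectation_1)
qed

lemma marginal_restrict:
  assumes JH: "J \<subseteq> H" and H: "finite H"
  shows "marginal J = distr (marginal H) (PiM J (\<lambda>_. borel)) (\<lambda>f. restrict f J)"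
proof (rule measure_eqI)
  have J: "finite J" using JH H finite_subset by blast
  have restrict: "(\<lambda>f. restrict f J) \<in> measurable (marginal H) (PiM J (\<lambda>_. borel))"
    unfolding measurable_cong_sets[OF sets_marginal refl] by (rule measurable_restrict_subset[OF JH])
  fix X assume "X \<in> sets (marginal J)"
  then have X: "X \<in> sets (PiM J (\<lambda>_. borel))" by (simp add: sets_marginal)
  have Y: "(\<lambda>f. restrict f J) -` X \<inter> space (marginal H) \<in> sets (PiM H (\<lambda>_. borel))"
    using measurable_sets[OF restrict X] by (simp add: sets_marginal)
  have "indicator ((\<lambda>f. restrict f J) -` X \<inter> space (marginal H)) (to_discrete H y)
      = (indicator X (to_discrete J y) :: real)" for y
  proof -
    have "restrict (to_discrete H y) J = to_discrete J y" using JH by (auto simp: to_discrete_def fun_eq_iff)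
    then show ?thesis
      using to_discrete_in_space[of H y] sets_eq_imp_space_eq[OF sets_marginal] by (simp add: indicator_def)
  qed
  then show "emeasure (marginal J) X = emeasure (distr (marginal H) (PiM J (\<lambda>_. borel)) (\<lambda>f. restrict f J)) X"
    using emeasure_marginal[OF H order_refl Y] emeasure_marginal[OF J radius_mono[OF H JH] X]
    by (simp add: emeasure_distr[OF restrict X])
qed (simp add: sets_marginal)

lemma polish_projective_marginal: "polish_projective UNIV marginal"
  unfolding polish_projective_def projective_family_def
  using marginal_restrict prob_space_marginal by blast

end

sublocale continuous_kernel \<subseteq> projective_limit: polish_projective UNIV marginal
  by (rule polish_projective_marginal)

context continuous_kernel
begin

definition limit_law :: "(int \<Rightarrow> 'g) measure" where
  "limit_law = distr projective_limit.lim path_space of_discrete_path"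

lemma measurable_of_discrete_path: "of_discrete_path \<in> measurable projective_limit.lim path_space"
  unfolding measurable_cong_sets[OF projective_limit.sets_lim refl] path_space_def of_discrete_path_def
proof (rule measurable_PiM_single')
  fix t :: int
  have "of_discrete \<in> measurable (borel :: 'g discrete measure) (count_space UNIV)"
    unfolding measurable_cong_sets[OF sets_borel_eq_count_space refl] by simp
  then show "(\<lambda>x. of_discrete (x t)) \<in> measurable (PiM UNIV (\<lambda>_. borel :: 'g discrete measure)) (count_space UNIV)"
    by (rule measurable_compose[rotated]) simp
qed (auto simp: space_PiM)

lemma sets_limit_law: "sets limit_law = sets path_space"
  by (simp add: limit_law_def)

lemma space_limit_law: "space limit_law = UNIV"
  by (simp add: limit_law_def path_space_def space_PiM)

lemma prob_space_limit_law: "prob_space limit_law"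
  unfolding limit_law_def by (rule projective_limit.P.prob_space_distr[OF measurable_of_discrete_path])

end

lemma rectangle_in_sets_path_space:
  "finite S \<Longrightarrow> {x. \<forall>t\<in>S. x t \<in> A t} \<in> sets path_space"
proof -
  assume "finite S"
  moreover have "{x. \<forall>t\<in>S. x t \<in> A t} = prod_emb UNIV (\<lambda>_. count_space UNIV) S (PiE S A)"
    by (auto simp: prod_emb_iff PiE_iff)
  ultimately show ?thesis unfolding path_space_def by (auto intro: sets_PiM_I)
qed

lemma cylinder_in_sets_path_space: "finite J \<Longrightarrow> cylinder J z \<in> sets path_space"
  using rectangle_in_sets_path_space[of J "\<lambda>t. {z t}"] by (simp add: cylinder_def)

context continuous_kernel
begin

lemma depends_on_borel_measurable:
  fixes f :: "(int \<Rightarrow> 'g) \<Rightarrow> real"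
  assumes "finite J" "depends_on J f" "\<And>z. cylinder J z \<in> sets M"
  shows "f \<in> borel_measurable M"
proof -
  have "f = (\<lambda>x. \<Sum>z\<in>frozen_outside J. f z * indicator (cylinder J z) x)"
    using sum_indicator_cylinder[OF assms(1,2)] by simp
  also have "\<dots> \<in> borel_measurable M"
    using assms(3) by (intro borel_measurable_sum borel_measurable_times borel_measurable_const
      borel_measurable_indicator)
  finally show ?thesis .
qed

lemma measure_limit_law_cylinder:
  "measure limit_law (cylinder (window N) y) = limit_expectation N (indicator (cylinder (window N) y))"
proof -
  let ?W = "window N"
  have singleton: "{to_discrete ?W y} \<in> sets (PiM ?W (\<lambda>_. borel :: 'g discrete measure))"
  proof -
    have "{to_discrete ?W y} = PiE ?W (\<lambda>t. {discrete (y t)})"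
      by (auto simp: to_discrete_def PiE_iff fun_eq_iff extensional_def)
    then show ?thesis by (simp add: sets_PiM_I_finite)
  qed
  have to_discrete_eq: "to_discrete ?W y' = to_discrete ?W y \<longleftrightarrow> y' \<in> cylinder ?W y" for y'
    by (auto simp: to_discrete_def cylinder_def fun_eq_iff restrict_def discrete_inject split: if_splits)
  have preimage: "of_discrete_path -` cylinder ?W y \<inter> space projective_limit.lim
      = prod_emb UNIV (\<lambda>_. borel) ?W {to_discrete ?W y}"
  proof -
    have "of_discrete a = c \<longleftrightarrow> a = discrete c" for a :: "'g discrete" and c
      using discrete_inverse[of c] of_discrete_inverse[of a] by auto
    then have "restrict x ?W = to_discrete ?W y \<longleftrightarrow> (\<forall>t\<in>?W. of_discrete (x t) = y t)" for x :: "int \<Rightarrow> 'g discrete"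
      by (auto simp: to_discrete_def fun_eq_iff restrict_def split: if_splits)
    then show ?thesis by (auto simp: cylinder_def of_discrete_path_def prod_emb_iff space_PiM)
  qed
  have "measure limit_law (cylinder ?W y)
      = measure projective_limit.lim (of_discrete_path -` cylinder ?W y \<inter> space projective_limit.lim)"
    unfolding limit_law_def
    by (rule measure_distr[OF measurable_of_discrete_path cylinder_in_sets_path_space]) simp
  also have "\<dots> = measure (marginal ?W) {to_discrete ?W y}"
    unfolding preimage by (rule projective_limit.measure_lim_emb) (auto intro: singleton)
  also have "\<dots> = limit_expectation N (\<lambda>y'. indicator {to_discrete ?W y} (to_discrete ?W y'))"
    unfolding measure_def emeasure_marginal[OF finite_atLeastAtMost_int radius_le[OF finite_atLeastAtMost_int order_refl] singleton]
    by (intro enn2real_ennreal limit_expectation_nonneg) auto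
  also have "(\<lambda>y'. indicator {to_discrete ?W y} (to_discrete ?W y')) = indicator (cylinder ?W y)"
    by (auto simp: indicator_def to_discrete_eq)
  finally show ?thesis .
qed

lemma integral_limit_law_local:
  assumes f: "depends_on (window N) f"
  shows "(\<integral>x. f x \<partial>limit_law) = limit_expectation N f"
proof -
  interpret prob_space limit_law by (rule prob_space_limit_law)
  have cyl: "cylinder (window N) y \<in> sets limit_law" for y
    by (simp add: sets_limit_law cylinder_in_sets_path_space)
  have "(\<integral>x. f x \<partial>limit_law)
      = (\<integral>x. (\<Sum>y\<in>frozen_outside (window N). f y * indicator (cylinder (window N) y) x) \<partial>limit_law)"
    using sum_indicator_cylinder[OF _ f] by simp
  also have "\<dots> = (\<Sum>y\<in>frozen_outside (window N). \<integral>x. f y * indicator (cylinder (window N) y) x \<partial>limit_law)"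
    using cyl by (intro Bochner_Integration.integral_sum integrable_mult_right integrable_real_indicator)
      (auto simp: emeasure_finite less_top[symmetric])
  also have "\<dots> = (\<Sum>y\<in>frozen_outside (window N). f y * measure limit_law (cylinder (window N) y))"
    using cyl by simp
  also have "\<dots> = limit_expectation N (\<lambda>x. \<Sum>y\<in>frozen_outside (window N). f y * indicator (cylinder (window N) y) x)"
    by (simp add: measure_limit_law_cylinder limit_expectation_sum)
  also have "\<dots> = limit_expectation N f"
    using sum_indicator_cylinder[OF _ f] by simp
  finally show ?thesis .
qed

end

lemma space_past_algebra: "space (past_algebra n) = UNIV"
  unfolding past_algebra_def path_space_def by (simp add: space_PiM)

lemma sets_past_algebra: "sets (past_algebra n) = sigma_sets UNIV {{x. x j \<in> B} | j B. j < n}"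
  unfolding past_algebra_def path_space_def by (subst sets_measure_of) (auto simp: space_PiM)

lemma coordinate_in_sets_past_algebra: "j < n \<Longrightarrow> {x. x j \<in> B} \<in> sets (past_algebra n)"
  unfolding sets_past_algebra by (rule sigma_sets.Basic) auto

lemma cylinder_in_sets_past_algebra:
  assumes "finite J" "J \<subseteq> {..<n}"
  shows "cylinder J z \<in> sets (past_algebra n)"
proof (cases "J = {}")
  case True then show ?thesis
    using sets.top[of "past_algebra n"] by (simp add: cylinder_def space_past_algebra)
next
  case False
  have "cylinder J z = (\<Inter>t\<in>J. {x. x t \<in> {z t}})" by (auto simp: cylinder_def)
  also have "\<dots> \<in> sets (past_algebra n)"
    using assms False by (intro sets.finite_INT coordinate_in_sets_past_algebra) auto
  finally show ?thesis .
qed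

context continuous_kernel
begin

text \<open>The kernel read off a window of length L of the past (with b beyond it) approximates
  the kernel uniformly; this gives measurability of the kernel as a function of the path.\<close>

definition truncated_kernel :: "int \<Rightarrow> nat \<Rightarrow> 'g \<Rightarrow> (int \<Rightarrow> 'g) \<Rightarrow> real" where
  "truncated_kernel n L g x = p g (past n (\<lambda>t. if n - int L \<le> t \<and> t < n then x t else b))"

lemma depends_on_truncated_kernel: "depends_on {n - int L..<n} (truncated_kernel n L g)"
  unfolding depends_on_def truncated_kernel_def
  by (auto intro!: arg_cong[where f = "\<lambda>x. p g (past n x)"])

lemma truncated_kernel_approx:
  assumes "\<epsilon> > 0"
  shows "\<exists>L0. \<forall>L\<ge>L0. \<forall>x. \<bar>p g (past n x) - truncated_kernel n L g x\<bar> \<le> \<epsilon>"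
proof -
  obtain L0 where L0: "\<forall>w w'. (\<forall>k. 1 \<le> k \<and> k \<le> L0 \<longrightarrow> w k = w' k) \<longrightarrow> \<bar>p g w - p g w'\<bar> \<le> \<epsilon>"
    using continuous[OF assms] by blast
  have "\<bar>p g (past n x) - truncated_kernel n L g x\<bar> \<le> \<epsilon>" if "L \<ge> L0" for L x
    using that L0 unfolding truncated_kernel_def by (auto simp: past_def)
  then show ?thesis by blast
qed

lemma truncated_kernel_tendsto: "(\<lambda>L. truncated_kernel n L g x) \<longlonglongrightarrow> p g (past n x)"
proof (rule LIMSEQ_I)
  fix r :: real assume "r > 0"
  then obtain L0 where L0: "\<forall>L\<ge>L0. \<forall>x. \<bar>p g (past n x) - truncated_kernel n L g x\<bar> \<le> r / 2"
    using truncated_kernel_approx[of "r / 2"] by force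
  have "norm (truncated_kernel n L g x - p g (past n x)) < r" if "L \<ge> L0" for L
  proof -
    have "norm (truncated_kernel n L g x - p g (past n x)) = \<bar>p g (past n x) - truncated_kernel n L g x\<bar>"
      by (simp add: abs_minus_commute)
    moreover have "\<bar>p g (past n x) - truncated_kernel n L g x\<bar> \<le> r / 2" using L0 that by blast
    ultimately show ?thesis using \<open>r > 0\<close> by linarith
  qed
  then show "\<exists>L0. \<forall>L\<ge>L0. norm (truncated_kernel n L g x - p g (past n x)) < r" by blast
qed

lemma kernel_borel_measurable:
  assumes "\<And>J z. finite J \<Longrightarrow> J \<subseteq> {..<n} \<Longrightarrow> cylinder J z \<in> sets M"
  shows "(\<lambda>x. p g (past n x)) \<in> borel_measurable M"
proof (rule borel_measurable_LIMSEQ_real[OF truncated_kernel_tendsto])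
  fix L show "truncated_kernel n L g \<in> borel_measurable M"
    by (rule depends_on_borel_measurable[OF _ depends_on_truncated_kernel assms]) auto
qed

end

section \<open>Compatibility of the limit law\<close>

lemma (in prob_space) abs_integral_diff_le:
  fixes f g :: "'a \<Rightarrow> real"
  assumes "integrable M f" "integrable M g" "\<And>x. \<bar>f x - g x\<bar> \<le> c"
  shows "\<bar>(\<integral>x. f x \<partial>M) - (\<integral>x. g x \<partial>M)\<bar> \<le> c"
proof -
  have "\<bar>(\<integral>x. f x \<partial>M) - (\<integral>x. g x \<partial>M)\<bar> = \<bar>\<integral>x. f x - g x \<partial>M\<bar>"
    using assms(1,2) by simp
  also have "\<dots> \<le> (\<integral>x. \<bar>f x - g x\<bar> \<partial>M)" by (rule integral_abs_bound)
  also have "\<dots> \<le> (\<integral>x. c \<partial>M)"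
    using assms by (intro integral_mono) auto
  finally show ?thesis by (simp add: prob_space)
qed

lemma emeasure_eq_on_sigma_sets:
  assumes M: "finite_measure M" and N: "finite_measure N" and sets_eq: "sets M = sets N"
    and E: "Int_stable E" "E \<subseteq> sets M" "space M \<in> E"
    and eq: "\<And>X. X \<in> E \<Longrightarrow> emeasure M X = emeasure N X"
    and X: "X \<in> sigma_sets (space M) E"
  shows "emeasure M X = emeasure N X"
proof -
  have sigma: "sigma_sets (space M) E \<subseteq> sets M"
    using E(2) by (rule sets.sigma_sets_subset)
  have space_eq: "space N = space M" using sets_eq_imp_space_eq[OF sets_eq] by simp
  have "E \<subseteq> Pow (space M)" using E(2) sets.sets_into_space by blast
  from E(1) this X show ?thesis
  proof (induct rule: sigma_sets_induct_disjoint)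
    case (compl A)
    then have A: "A \<in> sets M" using sigma by blast
    then have "emeasure M (space M - A) = emeasure M (space M) - emeasure M A"
      by (simp add: emeasure_compl finite_measure.emeasure_finite[OF M])
    also have "\<dots> = emeasure N (space N) - emeasure N A"
      using compl(2) eq[OF E(3)] space_eq by simp
    also have "\<dots> = emeasure N (space M - A)"
      using emeasure_compl[of A N] A sets_eq space_eq finite_measure.emeasure_finite[OF N] by simp
    finally show ?case .
  next
    case (union A)
    then have "range A \<subseteq> sets M" using sigma by blast
    then show ?case
      using union(1,3) sets_eq by (simp add: suminf_emeasure[symmetric])
  qed (simp_all add: eq)
qed

definition past_rectangles :: "int \<Rightarrow> (int \<Rightarrow> 'g) set set" where
  "past_rectangles n = {{x. \<forall>t\<in>S. x t \<in> A t} | S A. finite S \<and> S \<subseteq> {..<n}}"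

lemma Int_stable_past_rectangles: "Int_stable (past_rectangles n)"
proof (rule Int_stableI)
  fix X Y :: "(int \<Rightarrow> 'a) set" assume "X \<in> past_rectangles n" "Y \<in> past_rectangles n"
  then obtain S A S' A' where X: "X = {x. \<forall>t\<in>S. x t \<in> A t}" "finite S" "S \<subseteq> {..<n}"
    and Y: "Y = {x. \<forall>t\<in>S'. x t \<in> A' t}" "finite S'" "S' \<subseteq> {..<n}"
    unfolding past_rectangles_def by blast
  define A'' where "A'' t = (if t \<in> S then A t else UNIV) \<inter> (if t \<in> S' then A' t else UNIV)" for t
  have "X \<inter> Y = {x. \<forall>t\<in>S \<union> S'. x t \<in> A'' t}"
    unfolding X Y A''_def by auto
  moreover have "finite (S \<union> S')" "S \<union> S' \<subseteq> {..<n}" using X Y by auto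
  ultimately show "X \<inter> Y \<in> past_rectangles n"
    unfolding past_rectangles_def by (intro CollectI exI[of _ "S \<union> S'"] exI[of _ A'']) simp
qed

lemma UNIV_in_past_rectangles: "UNIV \<in> past_rectangles n"
  unfolding past_rectangles_def by (intro CollectI exI[of _ "{}"] exI[of _ "\<lambda>_. UNIV"]) simp

lemma sets_past_algebra_subset_past_rectangles:
  "sets (past_algebra n) \<subseteq> sigma_sets UNIV (past_rectangles n)"
  unfolding sets_past_algebra
proof (rule sigma_sets_mono')
  show "{{x. x j \<in> B} | j B. j < n} \<subseteq> past_rectangles n"
  proof clarify
    fix j :: int and B :: "'g set" assume "j < n"
    then show "{x. x j \<in> B} \<in> past_rectangles n"
      unfolding past_rectangles_def by (intro CollectI exI[of _ "{j}"] exI[of _ "\<lambda>_. B"]) auto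
  qed
qed

context continuous_kernel
begin

lemma kernel_borel_measurable_limit_law: "(\<lambda>x. p g (past n x)) \<in> borel_measurable limit_law"
  by (rule kernel_borel_measurable) (simp add: sets_limit_law cylinder_in_sets_path_space)

lemma integrable_indicator_kernel:
  assumes "D \<in> sets limit_law"
  shows "integrable limit_law (\<lambda>x. indicator D x * p g (past n x))"
proof -
  interpret prob_space limit_law by (rule prob_space_limit_law)
  show ?thesis
    using assms kernel_borel_measurable_limit_law
    by (intro integrable_const_bound[where B = 1]) (auto simp: indicator_def nonneg le_1)
qed

lemma limit_expectation_next_state_le:
  assumes f: "depends_on {..<n} f" and "depends_on (window N) (\<lambda>x. f x * of_bool (x n = g))"
    and "depends_on (window N) f'" "n \<le> int N" "\<And>x. \<bar>f' x - f x * p g (past n x)\<bar> \<le> \<epsilon>"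
  shows "\<bar>limit_expectation N (\<lambda>x. f x * of_bool (x n = g)) - limit_expectation N f'\<bar> \<le> \<epsilon>"
proof (rule limit_expectation_abs_diff_le[OF assms(2,3)])
  fix i assume "i \<ge> nat (- n)"
  moreover have "i \<le> diag_subseq i" using diag_subseq(1) by (rule seq_suble)
  ultimately have "- int (diag_subseq i) \<le> n" by linarith
  then have "box_expectation (diag_subseq i) (int N) (\<lambda>x. f x * of_bool (x n = g))
      = box_expectation (diag_subseq i) (int N) (\<lambda>x. f x * p g (past n x))"
    using assms(4) by (intro box_expectation_next_state[OF f])
  then show "\<bar>box_expectation (diag_subseq i) (int N) (\<lambda>x. f x * of_bool (x n = g))
      - box_expectation (diag_subseq i) (int N) f'\<bar> \<le> \<epsilon>"
    using box_expectation_abs_diff_le[of _ "int N" f' "\<lambda>x. f x * p g (past n x)"] assms(5)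
    by (simp add: abs_minus_commute)
qed

lemma compatibility_defect_le:
  fixes A :: "int \<Rightarrow> 'g set"
  assumes S: "finite S" "S \<subseteq> {..<n}" and "\<epsilon> > 0"
  defines "B \<equiv> {x. \<forall>t\<in>S. x t \<in> A t}"
  shows "\<bar>measure limit_law ({x. x n = g} \<inter> B) - (\<integral>x. indicator B x * p g (past n x) \<partial>limit_law)\<bar> \<le> 2 * \<epsilon>"
proof -
  interpret prob_space limit_law by (rule prob_space_limit_law)
  obtain L where L: "\<And>x. \<bar>p g (past n x) - truncated_kernel n L g x\<bar> \<le> \<epsilon>"
    using truncated_kernel_approx[OF \<open>\<epsilon> > 0\<close>, of g n] by blast
  let ?F1 = "\<lambda>x. indicator B x * of_bool (x n = g) :: real"
  let ?F2 = "\<lambda>x. indicator B x * truncated_kernel n L g x"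
  let ?H = "\<lambda>x. indicator B x * p g (past n x)"
  define N where "N = radius (S \<union> {n} \<union> {n - int L..<n})"
  have window: "S \<union> {n} \<union> {n - int L..<n} \<subseteq> window N"
    unfolding N_def using S by (intro subset_window_radius) auto
  have B: "depends_on S (indicator B :: _ \<Rightarrow> real)"
    unfolding B_def depends_on_def indicator_def by auto
  have F1: "depends_on (window N) ?F1"
    using window by (intro depends_on_mult depends_on_mono[OF B]) (auto simp: depends_on_def)
  have F2: "depends_on (window N) ?F2"
    using window by (intro depends_on_mult depends_on_mono[OF B] depends_on_mono[OF depends_on_truncated_kernel]) auto
  have F2_H: "\<bar>?F2 x - ?H x\<bar> \<le> \<epsilon>" for x
    using L[of x] \<open>\<epsilon> > 0\<close> by (simp add: indicator_def abs_minus_commute)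
  have "\<bar>limit_expectation N ?F1 - limit_expectation N ?F2\<bar> \<le> \<epsilon>"
    using window S(2) by (intro limit_expectation_next_state_le[OF _ F1 F2 _ F2_H] depends_on_mono[OF B]) auto
  moreover have "\<bar>(\<integral>x. ?F2 x \<partial>limit_law) - (\<integral>x. ?H x \<partial>limit_law)\<bar> \<le> \<epsilon>"
  proof (rule abs_integral_diff_le[OF _ _ F2_H])
    have B_sets: "B \<in> sets limit_law"
      unfolding B_def sets_limit_law using S(1) by (rule rectangle_in_sets_path_space)
    show "integrable limit_law ?F2"
      using depends_on_borel_measurable[OF _ F2, of limit_law]
      by (intro integrable_const_bound[where B = 1])
        (auto simp: sets_limit_law cylinder_in_sets_path_space indicator_def truncated_kernel_def nonneg le_1)
    show "integrable limit_law ?H"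
      using B_sets by (rule integrable_indicator_kernel)
  qed
  moreover have "measure limit_law ({x. x n = g} \<inter> B) = (\<integral>x. ?F1 x \<partial>limit_law)"
  proof -
    have "?F1 = indicator ({x. x n = g} \<inter> B)" by (auto simp: indicator_def fun_eq_iff)
    moreover have "{x. x n = g} \<in> sets path_space"
      using rectangle_in_sets_path_space[of "{n}" "\<lambda>_. {g}"] by simp
    moreover have "B \<in> sets path_space"
      unfolding B_def using S(1) by (rule rectangle_in_sets_path_space)
    ultimately show ?thesis by (simp add: sets_limit_law)
  qed
  ultimately show ?thesis
    using integral_limit_law_local[OF F1] integral_limit_law_local[OF F2] by linarith
qed

lemma compatibility_on_past_rectangle:
  assumes "X \<in> past_rectangles n"
  shows "measure limit_law ({x. x n = g} \<inter> X) = (\<integral>x. indicator X x * p g (past n x) \<partial>limit_law)"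
proof -
  obtain S A where "X = {x. \<forall>t\<in>S. x t \<in> A t}" "finite S" "S \<subseteq> {..<n}"
    using assms unfolding past_rectangles_def by blast
  then have "\<bar>measure limit_law ({x. x n = g} \<inter> X) - (\<integral>x. indicator X x * p g (past n x) \<partial>limit_law)\<bar> \<le> 0 + e"
    if "e > 0" for e
    using compatibility_defect_le[of S n "e / 2"] that by simp
  then show ?thesis using field_le_epsilon[of _ 0] by force
qed

lemma emeasure_density_event:
  assumes "D \<in> sets limit_law"
  shows "emeasure (density limit_law (indicator {x. x n = g})) D = emeasure limit_law ({x. x n = g} \<inter> D)"
proof -
  have E: "{x. x n = g} \<in> sets limit_law"
    using rectangle_in_sets_path_space[of "{n}" "\<lambda>_. {g}"] by (simp add: sets_limit_law)
  have "emeasure (density limit_law (indicator {x. x n = g})) D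
      = (\<integral>\<^sup>+x. indicator ({x. x n = g} \<inter> D) x \<partial>limit_law)"
    using assms E by (simp add: emeasure_density indicator_inter_arith)
  also have "\<dots> = emeasure limit_law ({x. x n = g} \<inter> D)"
    using assms E by (intro nn_integral_indicator) auto
  finally show ?thesis .
qed

lemma emeasure_density_kernel:
  assumes "D \<in> sets limit_law"
  shows "emeasure (density limit_law (\<lambda>x. ennreal (p g (past n x)))) D
    = ennreal (\<integral>x. indicator D x * p g (past n x) \<partial>limit_law)"
proof -
  have "emeasure (density limit_law (\<lambda>x. ennreal (p g (past n x)))) D
      = (\<integral>\<^sup>+x. ennreal (p g (past n x)) * indicator D x \<partial>limit_law)"
    using assms kernel_borel_measurable_limit_law by (simp add: emeasure_density)
  also have "\<dots> = (\<integral>\<^sup>+x. ennreal (indicator D x * p g (past n x)) \<partial>limit_law)"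
    by (intro nn_integral_cong) (simp add: indicator_def)
  also have "\<dots> = ennreal (\<integral>x. indicator D x * p g (past n x) \<partial>limit_law)"
    by (rule nn_integral_eq_integral[OF integrable_indicator_kernel[OF assms]]) (simp add: nonneg)
  finally show ?thesis .
qed

text \<open>Both sides of the compatibility identity are finite measures in B, agreeing on the
  \<inter>-stable generator formed by the past rectangles.\<close>

lemma compatibility_on_past_algebra:
  assumes B: "B \<in> sets (past_algebra n)"
  shows "measure limit_law ({x \<in> space limit_law. x n = g} \<inter> B)
    = (\<integral>x. indicator B x * p g (past n x) \<partial>limit_law)"
proof -
  interpret prob_space limit_law by (rule prob_space_limit_law)
  define \<nu>1 where "\<nu>1 = density limit_law (indicator {x. x n = g})"
  define \<nu>2 where "\<nu>2 = density limit_law (\<lambda>x. ennreal (p g (past n x)))"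
  have rectangles: "past_rectangles n \<subseteq> sets limit_law"
    unfolding past_rectangles_def sets_limit_law using rectangle_in_sets_path_space by blast
  have UNIV: "UNIV \<in> sets limit_law"
    using sets.top[of limit_law] by (simp add: space_limit_law)
  have sets: "sets \<nu>1 = sets limit_law" "sets \<nu>2 = sets limit_law" "space \<nu>1 = UNIV"
    by (simp_all add: \<nu>1_def \<nu>2_def space_limit_law)
  have finite: "finite_measure \<nu>1" "finite_measure \<nu>2"
    using emeasure_density_event[OF UNIV] emeasure_density_kernel[OF UNIV] emeasure_finite
    by (auto intro!: finite_measureI simp: \<nu>1_def \<nu>2_def space_limit_law)
  have B_sets: "B \<in> sets limit_law"
    using B sets_past_algebra_subset_past_rectangles sets.sigma_sets_subset[OF rectangles]
    by (auto simp: space_limit_law)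
  have "emeasure \<nu>1 B = emeasure \<nu>2 B"
  proof (rule emeasure_eq_on_sigma_sets[OF finite])
    show "emeasure \<nu>1 X = emeasure \<nu>2 X" if "X \<in> past_rectangles n" for X
      using that rectangles compatibility_on_past_rectangle[OF that]
      by (auto simp: \<nu>1_def \<nu>2_def emeasure_density_event emeasure_density_kernel emeasure_eq_measure)
    show "B \<in> sigma_sets (space \<nu>1) (past_rectangles n)"
      using B sets_past_algebra_subset_past_rectangles unfolding sets(3) by blast
    show "sets \<nu>1 = sets \<nu>2" "past_rectangles n \<subseteq> sets \<nu>1" "space \<nu>1 \<in> past_rectangles n"
      using rectangles UNIV_in_past_rectangles by (simp_all add: sets)
  qed (rule Int_stable_past_rectangles)
  then have "measure limit_law ({x. x n = g} \<inter> B) = enn2real (ennreal (\<integral>x. indicator B x * p g (past n x) \<partial>limit_law))"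
    using B_sets by (simp add: \<nu>1_def \<nu>2_def emeasure_density_event emeasure_density_kernel measure_def)
  then show ?thesis
    by (simp add: space_limit_law integral_nonneg nonneg)
qed

theorem compatible_limit_law: "compatible p limit_law"
  unfolding compatible_def
  using prob_space_limit_law sets_limit_law compatibility_on_past_algebra
    kernel_borel_measurable[OF cylinder_in_sets_past_algebra] by blast

theorem limit_law_absorbing:
  assumes "absorbing C" "b \<in> C"
  shows "measure limit_law {x \<in> space limit_law. x 0 \<in> C} = 1"
proof -
  have C: "depends_on (window 0) (indicator {x. x 0 \<in> C} :: _ \<Rightarrow> real)"
    by (auto simp: depends_on_def indicator_def)
  have "measure limit_law {x \<in> space limit_law. x 0 \<in> C} = (\<integral>x. indicator {x. x 0 \<in> C} x \<partial>limit_law)"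
    by (simp add: space_limit_law)
  also have "\<dots> = limit_expectation 0 (indicator {x. x 0 \<in> C})"
    by (rule integral_limit_law_local[OF C])
  also have "\<dots> = limit_expectation 0 (\<lambda>_. 1)"
    by (rule limit_expectation_cong_absorbing[OF assms C]) (auto simp: depends_on_def)
  finally show ?thesis by (simp add: limit_expectation_1)
qed

end

context imitation_params
begin

lemma continuous_kernel_imitation: "continuous_kernel (imitation_kernel A \<theta> P)"
proof
  show "0 \<le> imitation_kernel A \<theta> P g w" for g w by (rule imitation_kernel_nonneg)
  show "(\<Sum>g\<in>UNIV. imitation_kernel A \<theta> P g w) = 1" for w by (rule sum_imitation_kernel)
  show "imitation_kernel A \<theta> P g w = imitation_kernel A \<theta> P g w'"
    if "\<And>k. 1 \<le> k \<Longrightarrow> w k = w' k" for g w w' using that by (rule imitation_kernel_cong_past)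
  show "\<exists>L. \<forall>w w'. (\<forall>k. 1 \<le> k \<and> k \<le> L \<longrightarrow> w k = w' k) \<longrightarrow>
      \<bar>imitation_kernel A \<theta> P g w - imitation_kernel A \<theta> P g w'\<bar> \<le> \<epsilon>" if "\<epsilon> > 0" for g \<epsilon>
    using that by (rule imitation_kernel_continuous)
qed

lemma compatible_law_on_closed_class:
  assumes C: "closed_class A P C"
  shows "\<exists>\<mu>\<in>compatible_laws (imitation_kernel A \<theta> P). measure \<mu> {x \<in> space \<mu>. x 0 \<in> C} = 1"
proof -
  obtain i where "i \<in> C" using closed_class_nonempty[OF C] by blast
  interpret continuous_kernel "imitation_kernel A \<theta> P" i by (rule continuous_kernel_imitation)
  have "absorbing C"
    unfolding absorbing_def using imitation_kernel_closed_class[OF C] by blast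
  then have "measure limit_law {x \<in> space limit_law. x 0 \<in> C} = 1"
    using \<open>i \<in> C\<close> by (rule limit_law_absorbing)
  moreover have "limit_law \<in> compatible_laws (imitation_kernel A \<theta> P)"
    unfolding compatible_laws_def using compatible_limit_law by simp
  ultimately show ?thesis by blast
qed

end

lemma compatible_laws_distinct:
  assumes "\<mu>1 \<in> compatible_laws p" and "C1 \<inter> C2 = {}"
    and "measure \<mu>1 {x \<in> space \<mu>1. x 0 \<in> C1} = 1" "measure \<mu>2 {x \<in> space \<mu>2. x 0 \<in> C2} = 1"
  shows "\<mu>1 \<noteq> \<mu>2"
proof
  assume "\<mu>1 = \<mu>2"
  interpret prob_space \<mu>1 using assms(1) by (simp add: compatible_laws_def compatible_def)
  have sets_eq: "sets \<mu>1 = sets path_space" using assms(1) by (simp add: compatible_laws_def compatible_def)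
  have space: "space \<mu>1 = UNIV"
    using sets_eq_imp_space_eq[OF sets_eq] by (simp add: path_space_def space_PiM)
  have sets: "{x \<in> space \<mu>1. x 0 \<in> C} \<in> sets \<mu>1" for C
    using rectangle_in_sets_path_space[of "{0}" "\<lambda>_. C"] unfolding sets_eq space by simp
  have "measure \<mu>1 ({x \<in> space \<mu>1. x 0 \<in> C1} \<union> {x \<in> space \<mu>1. x 0 \<in> C2})
      = measure \<mu>1 {x \<in> space \<mu>1. x 0 \<in> C1} + measure \<mu>1 {x \<in> space \<mu>1. x 0 \<in> C2}"
    by (rule finite_measure_Union[OF sets sets]) (use assms(2) in blast)
  also have "\<dots> = 2" using assms(3,4) \<open>\<mu>1 = \<mu>2\<close> by simp
  finally show False
    using prob_le_1[of "{x \<in> space \<mu>1. x 0 \<in> C1} \<union> {x \<in> space \<mu>1. x 0 \<in> C2}"] by linarith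
qed

theorem mainTheorem2:
  fixes A :: "nat set" and \<theta> :: "nat \<Rightarrow> real" and P :: "nat \<Rightarrow> 'g::finite \<Rightarrow> 'g \<Rightarrow> real"
  assumes A_pos: "0 \<notin> A"
    and \<theta>_pos: "\<forall>k\<in>A. \<theta> k > 0"
    and \<theta>_sum: "(\<theta> has_sum 1) A"
    and P_stoch: "\<forall>k\<in>A. stochastic_matrix (P k)"
    and two_closed: "\<exists>C1 C2. C1 \<noteq> C2 \<and> closed_class A P C1 \<and> closed_class A P C2"
  shows "\<exists>\<mu>1 \<mu>2. \<mu>1 \<in> compatible_laws (imitation_kernel A \<theta> P) \<and>
                 \<mu>2 \<in> compatible_laws (imitation_kernel A \<theta> P) \<and> \<mu>1 \<noteq> \<mu>2"
proof -
  interpret imitation_params A \<theta> P using assms by unfold_locales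
  obtain C1 C2 where C: "C1 \<noteq> C2" "closed_class A P C1" "closed_class A P C2"
    using two_closed by blast
  obtain \<mu>1 where \<mu>1: "\<mu>1 \<in> compatible_laws (imitation_kernel A \<theta> P)" "measure \<mu>1 {x \<in> space \<mu>1. x 0 \<in> C1} = 1"
    using compatible_law_on_closed_class[OF C(2)] by blast
  obtain \<mu>2 where \<mu>2: "\<mu>2 \<in> compatible_laws (imitation_kernel A \<theta> P)" "measure \<mu>2 {x \<in> space \<mu>2. x 0 \<in> C2} = 1"
    using compatible_law_on_closed_class[OF C(3)] by blast
  have "C1 \<inter> C2 = {}" using closed_classes_disjoint[OF P_nonneg C(2,3,1)] .
  then have "\<mu>1 \<noteq> \<mu>2" using compatible_laws_distinct \<mu>1 \<mu>2 by blast
  then show ?thesis using \<mu>1(1) \<mu>2(1) by blast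
qed

end
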